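(* Let $\mu,\nu$ be locally finite Borel measures on $\mathbb C$, $\gamma>0$, $x,z\in\mathbb C$, $r>0$, $s\in(0,r]$, with $B(z,s)\subset B(x,3r)$, $x\in\operatorname{supp}\nu$, and $\alpha_{\mu,\nu}(B(x,r))\le\gamma\,\delta_\mu(B(x,r))$. Then: (1) if $\gamma<\frac19(s/r)^2$, then $\delta_\mu(B(z,s))\le 3D_\nu\big(1+8\sqrt\gamma\,\tfrac rs\big)\delta_\mu(B(x,r))$, and if moreover $\nu$ is a line measure, $\delta_\mu(B(z,s))\le\big(1+8\sqrt\gamma\,\tfrac rs\big)\delta_\mu(B(x,r))$; (2) if $\gamma<\frac{1}{9D_\nu}(s/r)^2$ and $z\in\operatorname{supp}\nu$, then $\delta_\mu(B(z,s))\ge D_\nu^{-1}\big(1-8\sqrt{D_\nu\gamma}\,\tfrac rs\big)\delta_\mu(B(x,r))$.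
   Context: $B(z,r)$ is the open disc; $\delta_\mu(B(z,r))=\mu(B(z,r))/(2r)$. Fix a Lipschitz $\varphi:[0,\infty)\to\mathbb R$ with $\varphi\equiv1$ on $[0,3)$, Lipschitz constant $1$, support in $[0,4)$. $\mathcal F_{z,r}$ = Lipschitz $f:\mathbb C\to\mathbb R$ with compact support in $B(z,4r)$ and Lipschitz constant $\le1/r$. $\alpha_{\mu,\nu}(B(z,r))=\sup_{f\in\mathcal F_{z,r}}|\frac1r\int\varphi(\frac{|w-z|}{r})f(w)\,d(\mu-c_{\mu,\nu}\nu)(w)|$, with $c_{\mu,\nu}=\int\varphi(|\cdot-z|/r)d\mu/\int\varphi(|\cdot-z|/r)d\nu$ if the denominator is nonzero and $0$ otherwise. Density ratio: $D_\nu=\sup\{\delta_\nu(B(x,r))/\delta_\nu(B(z,s)): r,s>0,\ x,z\in\operatorname{supp}\nu\}$ (statements are trivial if $D_\nu=\infty$). A line measure is $c\mathcal H^1|_L$, $c>0$, $L$ a line. *)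

theory Defs
  imports "HOL-Analysis.Analysis"
begin

definition loc_finite_borel :: "complex measure \<Rightarrow> bool" where
  "loc_finite_borel \<mu> \<longleftrightarrow> sets \<mu> = sets borel \<and>
     (\<forall>x. \<exists>e>0. emeasure \<mu> (ball x e) < \<infinity>)"

definition msupp :: "complex measure \<Rightarrow> complex set" where
  "msupp \<nu> = {x. \<forall>e>0. emeasure \<nu> (ball x e) > 0}"

definition dens :: "complex measure \<Rightarrow> complex \<Rightarrow> real \<Rightarrow> real" where
  "dens \<mu> z r = measure \<mu> (ball z r) / (2 * r)"

definition cutoff :: "(real \<Rightarrow> real) \<Rightarrow> bool" where
  "cutoff \<phi> \<longleftrightarrow> 1-lipschitz_on {0..} \<phi> \<and> (\<forall>t\<in>{0..<3}. \<phi> t = 1) \<and> (\<forall>t\<ge>4. \<phi> t = 0)"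

definition testF :: "complex \<Rightarrow> real \<Rightarrow> (complex \<Rightarrow> real) set" where
  "testF z r = {f. (1/r)-lipschitz_on UNIV f \<and> compact (closure {w. f w \<noteq> 0})
      \<and> closure {w. f w \<noteq> 0} \<subseteq> ball z (4*r)}"

definition cconst :: "(real \<Rightarrow> real) \<Rightarrow> complex measure \<Rightarrow> complex measure \<Rightarrow> complex \<Rightarrow> real \<Rightarrow> real" where
  "cconst \<phi> \<mu> \<nu> z r =
     (let d = integral\<^sup>L \<nu> (\<lambda>w. \<phi> (cmod (w - z) / r)) in
      if d \<noteq> 0 then integral\<^sup>L \<mu> (\<lambda>w. \<phi> (cmod (w - z) / r)) / d else 0)"

text \<open>alpha_{mu,nu}(B(z,r)); the integral against the signed measure mu - c nu is
  written as the difference of the two integrals.\<close>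
definition alpha :: "(real \<Rightarrow> real) \<Rightarrow> complex measure \<Rightarrow> complex measure \<Rightarrow> complex \<Rightarrow> real \<Rightarrow> real" where
  "alpha \<phi> \<mu> \<nu> z r = (SUP f \<in> testF z r.
     \<bar>(1/r) * (integral\<^sup>L \<mu> (\<lambda>w. \<phi> (cmod (w - z) / r) * f w)
        - cconst \<phi> \<mu> \<nu> z r * integral\<^sup>L \<nu> (\<lambda>w. \<phi> (cmod (w - z) / r) * f w))\<bar>)"

definition Dratio :: "complex measure \<Rightarrow> ereal" where
  "Dratio \<nu> = (SUP p \<in> {(x, r, z, s). r > 0 \<and> s > 0 \<and> x \<in> msupp \<nu> \<and> z \<in> msupp \<nu>}.
      (case p of (x, r, z, s) \<Rightarrow> ereal (dens \<nu> x r / dens \<nu> z s)))"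

text \<open>Line measures c H^1 restricted to a line L = {a + t u}, |u| = 1; H^1|_L is the
  image of Lebesgue measure on the real line under the isometry t |-> a + t u.\<close>
definition line_measure :: "complex measure \<Rightarrow> bool" where
  "line_measure \<nu> \<longleftrightarrow> (\<exists>c>0. \<exists>a u. cmod u = 1 \<and>
      \<nu> = scale_measure (ennreal c) (distr lborel borel (\<lambda>t. a + of_real t * u)))"

end

(* Test mu - c nu against radial ramps equal to 1 on a disc of radius a and vanishing off the
   concentric disc of radius b > a.  Their Lipschitz constant is 1/(b - a), so the flatness
   assumption alpha <= gamma delta_mu(B(x,r)) compares mu of the smaller disc with c nu of the
   larger one (and c nu of the smaller with mu of the larger) up to an error
   gamma delta_mu(B(x,r)) r^2/(b - a).  Doing this once around z and once around x with ramps
   of width t eliminates the unknown constant c; the density ratio of nu (or the exact linear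
   growth of a line measure) relates the two nu-discs, and t = sqrt gamma r (resp.
   sqrt (D gamma) r) balances the two errors. *)

theory Submission
  imports Defs
begin

lemma loc_finite_borel_sets: "loc_finite_borel \<mu> \<Longrightarrow> sets \<mu> = sets borel"
  by (simp add: loc_finite_borel_def)

lemma loc_finite_borel_space: "loc_finite_borel \<mu> \<Longrightarrow> space \<mu> = UNIV"
  using sets_eq_imp_space_eq[OF loc_finite_borel_sets] by auto

lemma emeasure_ball_finite:
  assumes "loc_finite_borel \<mu>"
  shows "emeasure \<mu> (ball w \<rho>) < \<infinity>"
proof -
  let ?T = "{ball y e | y e. e > 0 \<and> emeasure \<mu> (ball y e) < \<infinity>}"
  have cover: "cball w \<rho> \<subseteq> \<Union>?T"
  proof
    fix v
    obtain e where "e > 0" "emeasure \<mu> (ball v e) < \<infinity>"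
      using assms unfolding loc_finite_borel_def by blast
    then show "v \<in> \<Union>?T" by (auto intro!: exI[of _ "ball v e"])
  qed
  obtain T where T: "T \<subseteq> ?T" "finite T" "cball w \<rho> \<subseteq> \<Union>T"
    using compactE[OF compact_cball cover] by blast
  have sets: "T \<subseteq> sets \<mu>" using T(1) loc_finite_borel_sets[OF assms] by auto
  have "emeasure \<mu> (ball w \<rho>) \<le> emeasure \<mu> (\<Union>T)"
    using T(2,3) sets ball_subset_cball by (intro emeasure_mono) blast+
  also have "\<dots> \<le> (\<Sum>B\<in>T. emeasure \<mu> B)"
    using emeasure_subadditive_finite[of T id \<mu>] T(2) sets by auto
  also have "\<dots> < \<infinity>"
    using ennreal_sum_less_top[OF T(2), of "emeasure \<mu>"] T(1) by force
  finally show ?thesis .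
qed

lemma emeasure_eq_measure_ball:
  "loc_finite_borel \<mu> \<Longrightarrow> emeasure \<mu> (ball w \<rho>) = ennreal (measure \<mu> (ball w \<rho>))"
  using emeasure_ball_finite by (intro emeasure_eq_ennreal_measure) (simp add: less_top)

lemma measure_ball_pos:
  assumes "loc_finite_borel \<nu>" "x \<in> msupp \<nu>" "\<rho> > 0"
  shows "measure \<nu> (ball x \<rho>) > 0"
  using assms emeasure_eq_measure_ball[OF assms(1), of x \<rho>] unfolding msupp_def by auto

lemma msupp_meets_ball:
  assumes "loc_finite_borel \<nu>" "measure \<nu> (ball z \<rho>) > 0"
  shows "\<exists>z'\<in>msupp \<nu>. z' \<in> ball z \<rho>"
proof (rule ccontr)
  assume disj: "\<not> (\<exists>z'\<in>msupp \<nu>. z' \<in> ball z \<rho>)"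
  let ?F = "{ball v e | v e. e > 0 \<and> emeasure \<nu> (ball v e) = 0}"
  have cov: "ball z \<rho> \<subseteq> \<Union>?F"
  proof
    fix v assume "v \<in> ball z \<rho>"
    then have "v \<notin> msupp \<nu>" using disj by blast
    then obtain e where "e > 0" "emeasure \<nu> (ball v e) = 0"
      unfolding msupp_def by (auto simp: not_less)
    then show "v \<in> \<Union>?F" by (auto intro!: exI[of _ "ball v e"])
  qed
  obtain F where F: "F \<subseteq> ?F" "countable F" "\<Union>F = \<Union>?F"
    by (rule Lindelof[of ?F]) auto
  have null: "(\<Union>B\<in>F. B) \<in> null_sets \<nu>"
  proof (rule null_sets_UN'[OF F(2)])
    fix B assume "B \<in> F"
    then obtain v e where "B = ball v e" "emeasure \<nu> (ball v e) = 0" using F(1) by auto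
    then show "B \<in> null_sets \<nu>" using loc_finite_borel_sets[OF assms(1)] by (auto simp: null_sets_def)
  qed
  have "ball z \<rho> \<subseteq> (\<Union>B\<in>F. B)" using cov F(3) by simp
  moreover have "ball z \<rho> \<in> sets \<nu>" using loc_finite_borel_sets[OF assms(1)] by simp
  ultimately have "ball z \<rho> \<in> null_sets \<nu>" using null_sets_subset[OF null] by blast
  then show False using assms(2) by (simp add: measure_def null_setsD1)
qed

lemma integrable_vanishing_outside_ball:
  fixes f :: "complex \<Rightarrow> real"
  assumes "loc_finite_borel \<mu>" "continuous_on UNIV f"
    and "\<And>v. \<bar>f v\<bar> \<le> B" and "\<And>v. v \<notin> ball y \<rho> \<Longrightarrow> f v = 0"
  shows "integrable \<mu> f"
proof (rule integrableI_bounded_set[where A="ball y \<rho>" and B=B])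
  have "f \<in> borel_measurable borel" using assms(2) by (rule borel_measurable_continuous_onI)
  then show "f \<in> borel_measurable \<mu>"
    using measurable_cong_sets[OF loc_finite_borel_sets[OF assms(1)], of borel borel] by blast
qed (use assms loc_finite_borel_sets[OF assms(1)] emeasure_ball_finite[OF assms(1)] in auto)

lemma integrable_indicator_ball:
  "loc_finite_borel \<mu> \<Longrightarrow> integrable \<mu> (indicator (ball y \<rho>) :: complex \<Rightarrow> real)"
  using loc_finite_borel_sets emeasure_ball_finite by (intro integrable_real_indicator) auto

lemma integral_le_measure_ball:
  assumes "loc_finite_borel \<mu>" "integrable \<mu> f" "\<And>v. f v \<le> indicator (ball y \<rho>) v"
  shows "integral\<^sup>L \<mu> (f :: complex \<Rightarrow> real) \<le> measure \<mu> (ball y \<rho>)"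
  using integral_mono[OF assms(2) integrable_indicator_ball[OF assms(1)] assms(3)]
  by (simp add: loc_finite_borel_space[OF assms(1)])

lemma measure_ball_le_integral:
  assumes "loc_finite_borel \<mu>" "integrable \<mu> f" "\<And>v. indicator (ball y \<rho>) v \<le> f v"
  shows "measure \<mu> (ball y \<rho>) \<le> integral\<^sup>L \<mu> (f :: complex \<Rightarrow> real)"
  using integral_mono[OF integrable_indicator_ball[OF assms(1)] assms(2,3)]
  by (simp add: loc_finite_borel_space[OF assms(1)])

lemma abs_integral_le_measure_ball:
  assumes "loc_finite_borel \<mu>" "integrable \<mu> f" "\<And>v. \<bar>f v\<bar> \<le> B * indicator (ball y \<rho>) v"
  shows "\<bar>integral\<^sup>L \<mu> (f :: complex \<Rightarrow> real)\<bar> \<le> B * measure \<mu> (ball y \<rho>)"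
proof -
  have "\<bar>integral\<^sup>L \<mu> f\<bar> \<le> integral\<^sup>L \<mu> (\<lambda>v. B * indicator (ball y \<rho>) v)"
    using assms integrable_indicator_ball[OF assms(1)]
    by (intro order_trans[OF integral_abs_bound integral_mono]) auto
  then show ?thesis by (simp add: loc_finite_borel_space[OF assms(1)])
qed

section \<open>Cut-off functions and radial ramps\<close>

lemma cutoff_bounds:
  assumes "cutoff \<phi>" "t \<ge> 0"
  shows "0 \<le> \<phi> t \<and> \<phi> t \<le> 1"
proof -
  have lip: "1-lipschitz_on {0..} \<phi>" and one: "\<And>t. t \<in> {0..<3} \<Longrightarrow> \<phi> t = 1"
    and zero: "\<And>t. t \<ge> 4 \<Longrightarrow> \<phi> t = 0" using assms(1) unfolding cutoff_def by auto
  consider "t < 3" | "t \<ge> 4" | "3 \<le> t" "t < 4" by linarith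
  then show ?thesis
  proof cases
    case 3
    have "dist (\<phi> t) (\<phi> (t - 1)) \<le> 1 * dist t (t - 1)"
      by (rule lipschitz_onD[OF lip]) (use 3 in auto)
    moreover have "dist (\<phi> t) (\<phi> 4) \<le> 1 * dist t 4"
      by (rule lipschitz_onD[OF lip]) (use 3 in auto)
    moreover have "\<phi> (t - 1) = 1" "\<phi> 4 = 0" using one zero 3 by auto
    ultimately show ?thesis using 3 by (auto simp: dist_real_def)
  qed (use one zero assms(2) in auto)
qed

lemma continuous_on_cutoff_radial:
  fixes x :: "'a::real_normed_vector"
  assumes "cutoff \<phi>" "r > 0"
  shows "continuous_on UNIV (\<lambda>v. \<phi> (norm (v - x) / r))"
proof -
  have "continuous_on {0..} \<phi>"
    using assms unfolding cutoff_def by (auto intro: lipschitz_on_continuous_on)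
  moreover have "continuous_on UNIV (\<lambda>v. norm (v - x) / r)"
    using assms(2) by (intro continuous_intros) auto
  ultimately show ?thesis
    by (rule continuous_on_compose2) (use assms(2) in auto)
qed

definition bump :: "'a::real_normed_vector \<Rightarrow> real \<Rightarrow> real \<Rightarrow> 'a \<Rightarrow> real" where
  "bump w a b v = min 1 (max 0 ((b - norm (v - w)) / (b - a)))"

lemma bump_bounds: "0 \<le> bump w a b v \<and> bump w a b v \<le> 1"
  unfolding bump_def by auto

lemma bump_eq_1: "a < b \<Longrightarrow> v \<in> cball w a \<Longrightarrow> bump w a b v = 1"
  unfolding bump_def by (auto simp: field_simps dist_norm norm_minus_commute)

lemma bump_eq_0: "a < b \<Longrightarrow> v \<notin> ball w b \<Longrightarrow> bump w a b v = 0"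
  unfolding bump_def by (auto simp: field_simps divide_le_0_iff dist_norm norm_minus_commute)

lemma lipschitz_on_bump:
  assumes "a < b"
  shows "(1 / (b - a))-lipschitz_on UNIV (bump w a b)"
proof (rule lipschitz_onI)
  fix v1 v2
  have clamp: "\<bar>min 1 (max 0 p) - min 1 (max 0 q)\<bar> \<le> \<bar>p - q\<bar>" for p q :: real
    by (auto simp: min_def max_def)
  have "dist (bump w a b v1) (bump w a b v2) \<le> \<bar>norm (v2 - w) - norm (v1 - w)\<bar> / (b - a)"
    using clamp[of "(b - norm (v1 - w)) / (b - a)" "(b - norm (v2 - w)) / (b - a)"] assms
    by (simp add: bump_def dist_real_def diff_divide_distrib[symmetric] abs_divide)
  also have "\<dots> \<le> norm (v1 - v2) / (b - a)"
    using norm_triangle_ineq3[of "v2 - w" "v1 - w"] assms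
    by (intro divide_right_mono) (auto simp: norm_minus_commute)
  finally show "dist (bump w a b v1) (bump w a b v2) \<le> 1 / (b - a) * dist v1 v2"
    by (simp add: dist_norm)
qed (use assms in auto)

lemma continuous_on_bump: "a < b \<Longrightarrow> continuous_on UNIV (bump w a b)"
  using lipschitz_on_bump lipschitz_on_continuous_on by blast

section \<open>Test functions and the discrepancy\<close>

lemma testF_vanishes:
  assumes "f \<in> testF x r" "v \<notin> ball x (4 * r)"
  shows "f v = 0"
proof (rule ccontr)
  assume "f v \<noteq> 0"
  then have "v \<in> closure {w. f w \<noteq> 0}" by (meson closure_subset mem_Collect_eq subsetD)
  moreover have "closure {w. f w \<noteq> 0} \<subseteq> ball x (4 * r)"
    using assms(1) unfolding testF_def mem_Collect_eq by (elim conjE)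
  ultimately show False using assms(2) by auto
qed

lemma continuous_on_testF: "f \<in> testF x r \<Longrightarrow> continuous_on UNIV f"
  unfolding testF_def using lipschitz_on_continuous_on by blast

lemma testF_abs_le:
  assumes "f \<in> testF x r" "r > 0"
  shows "\<bar>f v\<bar> \<le> 8 * indicator (ball x (4 * r)) v"
proof (cases "v \<in> ball x (4 * r)")
  case True
  define w where "w = x + of_real (4 * r)"
  have lip: "(1/r)-lipschitz_on UNIV f" using assms(1) unfolding testF_def by blast
  have "w \<notin> ball x (4 * r)" using assms(2) by (simp add: w_def dist_norm)
  then have "\<bar>f v\<bar> = dist (f v) (f w)" using testF_vanishes[OF assms(1)] by (simp add: dist_real_def)
  also have "\<dots> \<le> 1 / r * dist v w" by (rule lipschitz_onD[OF lip]) auto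
  also have "\<dots> \<le> 1 / r * (dist v x + dist x w)"
    using assms(2) dist_triangle by (intro mult_left_mono) auto
  also have "\<dots> \<le> 1 / r * (8 * r)"
    using True assms(2) by (intro mult_left_mono) (auto simp: w_def dist_norm norm_minus_commute)
  finally show ?thesis using True assms(2) by simp
qed (use testF_vanishes[OF assms(1)] in auto)

definition discrepancy :: "(real \<Rightarrow> real) \<Rightarrow> complex measure \<Rightarrow> complex measure \<Rightarrow> complex \<Rightarrow> real
    \<Rightarrow> (complex \<Rightarrow> real) \<Rightarrow> real" where
  "discrepancy \<phi> \<mu> \<nu> x r F = integral\<^sup>L \<mu> (\<lambda>v. \<phi> (cmod (v - x) / r) * F v)
     - cconst \<phi> \<mu> \<nu> x r * integral\<^sup>L \<nu> (\<lambda>v. \<phi> (cmod (v - x) / r) * F v)"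

lemma alpha_eq_SUP_discrepancy:
  "alpha \<phi> \<mu> \<nu> x r = (SUP f \<in> testF x r. \<bar>(1/r) * discrepancy \<phi> \<mu> \<nu> x r f\<bar>)"
  by (simp add: alpha_def discrepancy_def)

lemma discrepancy_scale:
  "discrepancy \<phi> \<mu> \<nu> x r (\<lambda>v. k * F v) = k * discrepancy \<phi> \<mu> \<nu> x r F"
  by (simp add: discrepancy_def mult.left_commute right_diff_distrib)

lemma abs_integral_cutoff_testF_le:
  assumes "cutoff \<phi>" "loc_finite_borel \<mu>" "r > 0" "f \<in> testF x r"
  shows "\<bar>integral\<^sup>L \<mu> (\<lambda>v. \<phi> (cmod (v - x) / r) * f v)\<bar> \<le> 8 * measure \<mu> (ball x (4 * r))"
proof -
  have bound: "\<bar>\<phi> (cmod (v - x) / r) * f v\<bar> \<le> 8 * indicator (ball x (4 * r)) v" for v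
    using cutoff_bounds[OF assms(1), of "cmod (v - x) / r"] assms(3) testF_abs_le[OF assms(4,3), of v]
    by (simp add: abs_mult) (meson abs_ge_zero mult_left_le_one_le order_trans)
  have "integrable \<mu> (\<lambda>v. \<phi> (cmod (v - x) / r) * f v)"
  proof (rule integrable_vanishing_outside_ball[OF assms(2), where B=8 and y=x and \<rho>="4*r"])
    show "continuous_on UNIV (\<lambda>v. \<phi> (cmod (v - x) / r) * f v)"
      using continuous_on_cutoff_radial[OF assms(1,3)] continuous_on_testF[OF assms(4)]
      by (intro continuous_intros)
    fix v
    show "\<bar>\<phi> (cmod (v - x) / r) * f v\<bar> \<le> 8" using bound[of v] by (cases "v \<in> ball x (4 * r)") auto
    show "v \<notin> ball x (4 * r) \<Longrightarrow> \<phi> (cmod (v - x) / r) * f v = 0"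
      using testF_vanishes[OF assms(4)] by simp
  qed
  then show ?thesis using abs_integral_le_measure_ball[OF assms(2) _ bound] by blast
qed

lemma bdd_above_discrepancy:
  assumes "cutoff \<phi>" "loc_finite_borel \<mu>" "loc_finite_borel \<nu>" "r > 0"
  shows "bdd_above ((\<lambda>f. \<bar>(1/r) * discrepancy \<phi> \<mu> \<nu> x r f\<bar>) ` testF x r)"
proof (rule bdd_aboveI2)
  fix f assume f: "f \<in> testF x r"
  let ?c = "cconst \<phi> \<mu> \<nu> x r"
  have "\<bar>discrepancy \<phi> \<mu> \<nu> x r f\<bar>
      \<le> 8 * measure \<mu> (ball x (4 * r)) + \<bar>?c\<bar> * (8 * measure \<nu> (ball x (4 * r)))"
    unfolding discrepancy_def
    using abs_integral_cutoff_testF_le[OF assms(1,2,4) f] abs_integral_cutoff_testF_le[OF assms(1,3,4) f]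
    by (intro order_trans[OF abs_triangle_ineq4] add_mono) (auto simp: abs_mult mult_left_mono)
  then show "\<bar>(1/r) * discrepancy \<phi> \<mu> \<nu> x r f\<bar>
      \<le> 1/r * (8 * measure \<mu> (ball x (4 * r)) + \<bar>?c\<bar> * (8 * measure \<nu> (ball x (4 * r))))"
    using assms(4) by (simp add: abs_mult divide_right_mono)
qed

lemma rescaled_mem_testF:
  assumes "r > 0" "L > 0" "L-lipschitz_on UNIV F"
    and "\<And>v. v \<notin> ball w \<rho> \<Longrightarrow> F v = 0" "cball w \<rho> \<subseteq> ball x (4 * r)"
  shows "(\<lambda>v. 1 / (r * L) * F v) \<in> testF x r"
proof -
  let ?G = "\<lambda>v. 1 / (r * L) * F v"
  have "(1 / (r * L) * L)-lipschitz_on UNIV ?G"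
    using assms(1,2) by (intro lipschitz_on_cmult_real_nonneg[OF assms(3)]) simp
  then have "(1/r)-lipschitz_on UNIV ?G" using assms(2) by simp
  moreover have supp: "{v. ?G v \<noteq> 0} \<subseteq> ball w \<rho>"
  proof
    fix v assume "v \<in> {v. ?G v \<noteq> 0}"
    then have "F v \<noteq> 0" by auto
    then show "v \<in> ball w \<rho>" using assms(4) by blast
  qed
  then have "closure {v. ?G v \<noteq> 0} \<subseteq> cball w \<rho>"
    by (intro closure_minimal[OF order_trans[OF _ ball_subset_cball]]) auto
  moreover have "compact (closure {v. ?G v \<noteq> 0})"
    using bounded_subset[OF bounded_ball supp] by (simp add: compact_closure)
  ultimately show ?thesis using assms(5) unfolding testF_def by blast
qed

lemma abs_discrepancy_le_alpha:
  assumes "cutoff \<phi>" "loc_finite_borel \<mu>" "loc_finite_borel \<nu>" "r > 0" "L > 0"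
    and "L-lipschitz_on UNIV F" "\<And>v. v \<notin> ball w \<rho> \<Longrightarrow> F v = 0"
    and "cball w \<rho> \<subseteq> ball x (4 * r)"
  shows "\<bar>discrepancy \<phi> \<mu> \<nu> x r F\<bar> \<le> alpha \<phi> \<mu> \<nu> x r * r^2 * L"
proof -
  have le: "\<bar>(1/r) * discrepancy \<phi> \<mu> \<nu> x r (\<lambda>v. 1 / (r * L) * F v)\<bar> \<le> alpha \<phi> \<mu> \<nu> x r"
    unfolding alpha_eq_SUP_discrepancy
    by (rule cSUP_upper[OF rescaled_mem_testF[OF assms(4-8)] bdd_above_discrepancy[OF assms(1-4)]])
  have "(1/r) * discrepancy \<phi> \<mu> \<nu> x r (\<lambda>v. 1 / (r * L) * F v)
      = discrepancy \<phi> \<mu> \<nu> x r F / (r^2 * L)"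
    by (simp only: discrepancy_scale) (simp add: power2_eq_square)
  then have "\<bar>discrepancy \<phi> \<mu> \<nu> x r F / (r^2 * L)\<bar> \<le> alpha \<phi> \<mu> \<nu> x r"
    using le by metis
  then have "\<bar>discrepancy \<phi> \<mu> \<nu> x r F\<bar> / (r^2 * L) \<le> alpha \<phi> \<mu> \<nu> x r"
    using assms(4,5) by (simp add: abs_divide)
  then show ?thesis using assms(4,5) by (simp add: pos_divide_le_eq mult_ac)
qed

section \<open>Comparing concentric discs\<close>

lemma cconst_nonneg:
  assumes "cutoff \<phi>" "r > 0"
  shows "cconst \<phi> \<mu> \<nu> x r \<ge> 0"
proof -
  have "0 \<le> integral\<^sup>L m (\<lambda>w. \<phi> (cmod (w - x) / r))" for m :: "complex measure"
    using cutoff_bounds[OF assms(1)] assms(2) by (intro Bochner_Integration.integral_nonneg) auto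
  then show ?thesis unfolding cconst_def Let_def by simp
qed

lemma cutoff_bump_le_indicator:
  assumes "cutoff \<phi>" "r > 0" "a < b"
  shows "\<phi> (cmod (v - x) / r) * bump w a b v \<le> indicator (ball w b) v"
  using cutoff_bounds[OF assms(1), of "cmod (v - x) / r"] assms bump_bounds[of w a b v]
    bump_eq_0[OF assms(3), of v w]
  by (cases "v \<in> ball w b") (auto simp: mult_le_one)

lemma indicator_le_cutoff_bump:
  assumes "cutoff \<phi>" "r > 0" "a < b" "ball w a \<subseteq> ball x (3 * r)"
  shows "indicator (ball w a) v \<le> \<phi> (cmod (v - x) / r) * bump w a b v"
proof (cases "v \<in> ball w a")
  case True
  then have "v \<in> ball x (3 * r)" using assms(4) by blast
  then have "cmod (v - x) / r \<in> {0..<3}"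
    using assms(2) by (auto simp: dist_norm norm_minus_commute field_simps)
  then have "\<phi> (cmod (v - x) / r) = 1" using assms(1) unfolding cutoff_def by blast
  moreover have "bump w a b v = 1" using True by (intro bump_eq_1[OF assms(3)]) simp
  ultimately show ?thesis using True by simp
next
  case False
  then show ?thesis
    using cutoff_bounds[OF assms(1), of "cmod (v - x) / r"] assms(2) bump_bounds[of w a b v] by simp
qed

lemma integrable_cutoff_bump:
  assumes "cutoff \<phi>" "loc_finite_borel m" "r > 0" "a < b"
  shows "integrable m (\<lambda>v. \<phi> (cmod (v - x) / r) * bump w a b v)"
proof (rule integrable_vanishing_outside_ball[OF assms(2), where B=1 and y=w and \<rho>=b])
  show "continuous_on UNIV (\<lambda>v. \<phi> (cmod (v - x) / r) * bump w a b v)"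
    using continuous_on_cutoff_radial[OF assms(1,3)] continuous_on_bump[OF assms(4)]
    by (intro continuous_intros)
  fix v
  show "\<bar>\<phi> (cmod (v - x) / r) * bump w a b v\<bar> \<le> 1"
    using cutoff_bounds[OF assms(1), of "cmod (v - x) / r"] assms(3) bump_bounds[of w a b v]
    by (simp add: abs_mult mult_le_one)
  show "v \<notin> ball w b \<Longrightarrow> \<phi> (cmod (v - x) / r) * bump w a b v = 0"
    using bump_eq_0[OF assms(4), of v w] by simp
qed

lemma measure_ball_le_cconst_measure:
  assumes "cutoff \<phi>" "loc_finite_borel \<mu>" "loc_finite_borel \<nu>" "r > 0" "a < b"
    and "cball w b \<subseteq> ball x (4 * r)" "ball w a \<subseteq> ball x (3 * r)"
  shows "measure \<mu> (ball w a) \<le> cconst \<phi> \<mu> \<nu> x r * measure \<nu> (ball w b)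
           + alpha \<phi> \<mu> \<nu> x r * r^2 / (b - a)"
    and "cconst \<phi> \<mu> \<nu> x r * measure \<nu> (ball w a) \<le> measure \<mu> (ball w b)
           + alpha \<phi> \<mu> \<nu> x r * r^2 / (b - a)"
proof -
  let ?g = "\<lambda>v. \<phi> (cmod (v - x) / r) * bump w a b v"
  let ?c = "cconst \<phi> \<mu> \<nu> x r"
  have "\<bar>discrepancy \<phi> \<mu> \<nu> x r (bump w a b)\<bar> \<le> alpha \<phi> \<mu> \<nu> x r * r^2 * (1 / (b - a))"
    using assms(5,6) lipschitz_on_bump[OF assms(5)] bump_eq_0[OF assms(5)]
    by (intro abs_discrepancy_le_alpha[OF assms(1-4)]) auto
  then have disc: "\<bar>integral\<^sup>L \<mu> ?g - ?c * integral\<^sup>L \<nu> ?g\<bar> \<le> alpha \<phi> \<mu> \<nu> x r * r^2 / (b - a)"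
    by (simp add: discrepancy_def)
  have c0: "?c \<ge> 0" by (rule cconst_nonneg[OF assms(1,4)])
  have bounds: "measure m (ball w a) \<le> integral\<^sup>L m ?g" "integral\<^sup>L m ?g \<le> measure m (ball w b)"
    if "loc_finite_borel m" for m
    using integrable_cutoff_bump[OF assms(1) that assms(4,5)]
      indicator_le_cutoff_bump[OF assms(1,4,5,7)] cutoff_bump_le_indicator[OF assms(1,4,5)]
    by (auto intro: measure_ball_le_integral[OF that] integral_le_measure_ball[OF that])
  show "measure \<mu> (ball w a) \<le> ?c * measure \<nu> (ball w b) + alpha \<phi> \<mu> \<nu> x r * r^2 / (b - a)"
    using bounds[OF assms(2)] mult_left_mono[OF bounds(2)[OF assms(3)] c0] disc by linarith
  show "?c * measure \<nu> (ball w a) \<le> measure \<mu> (ball w b) + alpha \<phi> \<mu> \<nu> x r * r^2 / (b - a)"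
    using bounds[OF assms(2)] mult_left_mono[OF bounds(1)[OF assms(3)] c0] disc by linarith
qed

section \<open>Density ratio and line measures\<close>

lemma dens_nonneg: "r > 0 \<Longrightarrow> dens \<mu> z r \<ge> 0"
  by (simp add: dens_def)

lemma dens_pos: "loc_finite_borel \<nu> \<Longrightarrow> x \<in> msupp \<nu> \<Longrightarrow> \<rho> > 0 \<Longrightarrow> dens \<nu> x \<rho> > 0"
  using measure_ball_pos by (simp add: dens_def)

lemma dens_quotient_le_Dratio:
  assumes "x \<in> msupp \<nu>" "z \<in> msupp \<nu>" "\<rho> > 0" "\<sigma> > 0"
  shows "ereal (dens \<nu> x \<rho> / dens \<nu> z \<sigma>) \<le> Dratio \<nu>"
  unfolding Dratio_def using assms by (intro SUP_upper2[of "(x, \<rho>, z, \<sigma>)"]) auto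

lemma Dratio_ge_one:
  assumes "loc_finite_borel \<nu>" "x \<in> msupp \<nu>" "Dratio \<nu> \<noteq> \<infinity>"
  shows "1 \<le> real_of_ereal (Dratio \<nu>)"
proof -
  have "ereal 1 \<le> Dratio \<nu>"
    using dens_quotient_le_Dratio[OF assms(2,2), of 1 1] dens_pos[OF assms(1,2), of 1] by simp
  then show ?thesis using assms(3) by (cases "Dratio \<nu>") auto
qed

lemma dens_le_Dratio:
  assumes "loc_finite_borel \<nu>" "Dratio \<nu> \<noteq> \<infinity>" "x \<in> msupp \<nu>" "z \<in> msupp \<nu>" "\<rho> > 0" "\<sigma> > 0"
  shows "dens \<nu> x \<rho> \<le> real_of_ereal (Dratio \<nu>) * dens \<nu> z \<sigma>"
proof -
  have "ereal 1 \<le> Dratio \<nu>" using Dratio_ge_one[OF assms(1,3,2)] assms(2) by (cases "Dratio \<nu>") auto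
  then obtain D where D: "Dratio \<nu> = ereal D" using assms(2) by (cases "Dratio \<nu>") auto
  then have "dens \<nu> x \<rho> / dens \<nu> z \<sigma> \<le> D" using dens_quotient_le_Dratio[OF assms(3-6)] by simp
  then show ?thesis using dens_pos[OF assms(1,4,6)] D by (simp add: pos_divide_le_eq mult.commute)
qed

text \<open>Around a centre off the support we recentre at a nearby support point, at the price of
  doubling the radius.\<close>
lemma dens_le_two_Dratio:
  assumes "loc_finite_borel \<nu>" "Dratio \<nu> \<noteq> \<infinity>" "x \<in> msupp \<nu>" "\<rho> > 0" "\<sigma> > 0"
  shows "dens \<nu> z \<rho> \<le> 2 * real_of_ereal (Dratio \<nu>) * dens \<nu> x \<sigma>"
proof (cases "measure \<nu> (ball z \<rho>) > 0")
  case True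
  then obtain z' where z': "z' \<in> msupp \<nu>" "z' \<in> ball z \<rho>"
    using msupp_meets_ball[OF assms(1)] by blast
  have "ball z \<rho> \<subseteq> ball z' (2 * \<rho>)"
    using z'(2) by (simp add: ball_subset_ball_iff dist_commute)
  then have "measure \<nu> (ball z \<rho>) \<le> measure \<nu> (ball z' (2 * \<rho>))"
    using loc_finite_borel_sets[OF assms(1)] emeasure_ball_finite[OF assms(1)]
    by (intro measure_mono_fmeasurable) (auto intro: fmeasurableI)
  then have "dens \<nu> z \<rho> \<le> 2 * dens \<nu> z' (2 * \<rho>)"
    using assms(4) by (simp add: dens_def divide_right_mono)
  also have "\<dots> \<le> 2 * (real_of_ereal (Dratio \<nu>) * dens \<nu> x \<sigma>)"
    using dens_le_Dratio[OF assms(1,2) z'(1) assms(3)] assms(4,5) by simp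
  finally show ?thesis by simp
next
  case False
  then have "dens \<nu> z \<rho> = 0" by (simp add: dens_def not_less measure_le_0_iff)
  then show ?thesis
    using Dratio_ge_one[OF assms(1,3,2)] dens_nonneg[OF assms(5), of \<nu> x] by simp
qed

lemma measurable_line: "(\<lambda>t::real. a + of_real t * u) \<in> measurable lborel (borel :: complex measure)"
proof -
  have "continuous_on UNIV (\<lambda>t::real. a + of_real t * u)" by (intro continuous_intros)
  then show ?thesis using borel_measurable_continuous_onI by simp
qed

lemma norm_line_minus:
  assumes "cmod u = 1"
  shows "cmod (a + of_real t * u - w) = cmod (of_real t - (w - a) / u)"
proof -
  have "u \<noteq> 0" using assms by auto
  then have "a + of_real t * u - w = u * (of_real t - (w - a) / u)" by (simp add: field_simps)
  then show ?thesis using assms by (simp add: norm_mult)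
qed

lemma measure_line_ball_le:
  assumes "cmod u = 1" "\<rho> > 0"
  shows "measure (distr lborel borel (\<lambda>t. a + of_real t * u)) (ball w \<rho>) \<le> 2 * \<rho>"
proof -
  let ?q = "(w - a) / u"
  have "(\<lambda>t. a + of_real t * u) -` ball w \<rho> \<subseteq> {Re ?q - \<rho> <..< Re ?q + \<rho>}"
  proof
    fix t assume "t \<in> (\<lambda>t. a + of_real t * u) -` ball w \<rho>"
    then have "cmod (of_real t - ?q) < \<rho>"
      using norm_line_minus[OF assms(1)] by (simp add: dist_norm norm_minus_commute)
    then show "t \<in> {Re ?q - \<rho> <..< Re ?q + \<rho>}"
      using abs_Re_le_cmod[of "of_real t - ?q"] by auto
  qed
  then have "measure lborel ((\<lambda>t. a + of_real t * u) -` ball w \<rho>) \<le> measure lborel {Re ?q - \<rho> <..< Re ?q + \<rho>}"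
    using measurable_sets[OF measurable_line, of "ball w \<rho>" a u] assms(2)
    by (intro measure_mono_fmeasurable) (auto simp: fmeasurable_def)
  then show ?thesis using assms(2) by (simp add: measure_distr[OF measurable_line])
qed

lemma measure_line_ball_on_line:
  assumes "cmod u = 1" "\<rho> > 0"
  shows "measure (distr lborel borel (\<lambda>t. a + of_real t * u)) (ball (a + of_real t0 * u) \<rho>) = 2 * \<rho>"
proof -
  have "(\<lambda>t. a + of_real t * u) -` ball (a + of_real t0 * u) \<rho> = {t0 - \<rho> <..< t0 + \<rho>}"
  proof -
    have "dist (a + of_real t0 * u) (a + of_real t * u) = \<bar>t - t0\<bar>" for t
    proof -
      have "a + of_real t0 * u - (a + of_real t * u) = of_real (t0 - t) * u"
        by (simp add: algebra_simps)
      then show ?thesis using assms(1) by (simp add: dist_norm norm_mult del: of_real_diff)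
    qed
    then show ?thesis by auto
  qed
  then show ?thesis using assms(2) by (simp add: measure_distr[OF measurable_line])
qed

lemma emeasure_line_ball_off_line:
  assumes "cmod u = 1" "\<And>t. w \<noteq> a + of_real t * u"
  shows "\<exists>e>0. emeasure (distr lborel borel (\<lambda>t. a + of_real t * u)) (ball w e) = 0"
proof (intro exI conjI)
  let ?q = "(w - a) / u"
  have "Im ?q \<noteq> 0"
  proof
    assume "Im ?q = 0"
    then have "?q = of_real (Re ?q)" by (simp add: complex_eq_iff)
    moreover have "w = a + ?q * u" using assms(1) by auto
    ultimately have "w = a + of_real (Re ?q) * u" by simp
    then show False using assms(2) by blast
  qed
  then show "\<bar>Im ?q\<bar> > 0" by simp
  have "\<not> cmod (a + of_real t * u - w) < \<bar>Im ?q\<bar>" for t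
    using abs_Im_le_cmod[of "of_real t - ?q"] norm_line_minus[OF assms(1)] by simp
  then have "(\<lambda>t. a + of_real t * u) -` ball w \<bar>Im ?q\<bar> = {}"
    by (auto simp: dist_norm norm_minus_commute)
  then show "emeasure (distr lborel borel (\<lambda>t. a + of_real t * u)) (ball w \<bar>Im ?q\<bar>) = 0"
    by (simp add: emeasure_distr[OF measurable_line])
qed

text \<open>A line measure grows exactly linearly around the points of its support, the line.\<close>
lemma line_measure_dens_le:
  assumes "line_measure \<nu>" "x \<in> msupp \<nu>" "\<rho> > 0" "\<sigma> > 0"
  shows "dens \<nu> w \<rho> \<le> dens \<nu> x \<sigma>"
proof -
  obtain k a u where k: "k > 0" and u: "cmod u = 1"
    and \<nu>: "\<nu> = scale_measure (ennreal k) (distr lborel borel (\<lambda>t. a + of_real t * u))"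
    using assms(1) unfolding line_measure_def by blast
  have "\<exists>t0. x = a + of_real t0 * u"
  proof (rule ccontr)
    assume "\<nexists>t0. x = a + of_real t0 * u"
    then obtain e where "e > 0" "emeasure (distr lborel borel (\<lambda>t. a + of_real t * u)) (ball x e) = 0"
      using emeasure_line_ball_off_line[OF u] by blast
    then show False using assms(2) \<nu> unfolding msupp_def by auto
  qed
  then obtain t0 where x: "x = a + of_real t0 * u" by blast
  have "dens \<nu> w \<rho> \<le> k"
    using measure_line_ball_le[OF u assms(3), of a w] k assms(3) \<nu>
    by (simp add: dens_def divide_le_eq)
  also have "\<dots> = dens \<nu> x \<sigma>"
    using measure_line_ball_on_line[OF u assms(4), of a t0] k assms(4) \<nu> x by (simp add: dens_def)
  finally show ?thesis .
qed

section \<open>Density estimates\<close>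

lemma three_sqrt_mult_less:
  fixes \<gamma> r s :: real
  assumes "\<gamma> \<ge> 0" "r > 0" "s > 0" "\<gamma> < (s / r)\<^sup>2 / 9"
  shows "3 * sqrt \<gamma> * r < s"
proof -
  have "(s / r)\<^sup>2 / 9 = (s / (3 * r))\<^sup>2" by (simp add: power2_eq_square field_simps)
  then have "sqrt \<gamma> < sqrt ((s / (3 * r))\<^sup>2)" using assms(4) by (intro real_sqrt_less_mono) simp
  also have "\<dots> = s / (3 * r)" using assms(2,3) by simp
  finally show ?thesis using assms(2) by (simp add: field_simps)
qed

lemma density_upper_arith:
  fixes M P Q c C \<delta> r s t :: real
  assumes "0 < t" "3 * t < s" "s \<le> r" "0 \<le> c" "0 \<le> C" "0 \<le> \<delta>"
    and M: "M \<le> c * P + t * \<delta>" and Q: "c * Q \<le> 2 * r * \<delta> + t * \<delta>"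
    and PQ: "P / (2 * (s + t)) \<le> C * (Q / (2 * (r - t)))"
  shows "M / (2 * s) \<le> (C + (15 * C + 1) / 2 * (t / s)) * \<delta>"
proof -
  have rt: "r - t > 0" using assms(1-3) by linarith
  have key: "(s + t) * (2 * r + t) \<le> (2 * s + 15 * t) * (r - t)"
  proof -
    have "(2 * s + 15 * t) * (r - t) - (s + t) * (2 * r + t) = t * (13 * r - 3 * s - 16 * t)"
      by (simp add: algebra_simps)
    moreover have "t * (13 * r - 3 * s - 16 * t) > 0" using assms(1-3) by simp
    ultimately show ?thesis by linarith
  qed
  have "P \<le> C * ((s + t) / (r - t)) * Q"
    using PQ rt assms(1,2) by (simp add: field_simps)
  then have "c * P \<le> c * (C * ((s + t) / (r - t)) * Q)" by (rule mult_left_mono[OF _ assms(4)])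
  also have "\<dots> = C * ((s + t) / (r - t)) * (c * Q)" by (simp add: mult_ac)
  also have "\<dots> \<le> C * ((s + t) / (r - t)) * ((2 * r + t) * \<delta>)"
    using Q rt assms(1,2,5) by (intro mult_left_mono) (auto simp: algebra_simps)
  also have "\<dots> = C * \<delta> * ((s + t) * (2 * r + t) / (r - t))" by simp
  also have "\<dots> \<le> C * \<delta> * (2 * s + 15 * t)"
    using key rt assms(5,6) by (intro mult_left_mono) (auto simp: divide_le_eq)
  finally have "M \<le> (C * (2 * s + 15 * t) + t) * \<delta>" using M by (simp add: algebra_simps)
  then have "M / (2 * s) \<le> (C * (2 * s + 15 * t) + t) * \<delta> / (2 * s)"
    using assms(1,2) by (intro divide_right_mono) auto
  also have "\<dots> = (C + (15 * C + 1) / 2 * (t / s)) * \<delta>"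
    using assms(1,2) by (simp add: field_simps)
  finally show ?thesis .
qed

lemma density_lower_arith:
  fixes M P Q c D \<delta> r s t :: real
  assumes "0 < t" "3 * t < s" "s \<le> r" "1 \<le> D" "0 \<le> c" "0 \<le> \<delta>"
    and P: "c * P \<le> M + t * \<delta> / D" and Q: "2 * r * \<delta> \<le> c * Q + t * \<delta> / D"
    and QP: "Q / (2 * (r + t)) \<le> D * (P / (2 * (s - t)))"
  shows "(1 / D) * (1 - 8 * (t / s)) * \<delta> \<le> M / (2 * s)"
proof -
  have st: "s - t > 0" using assms(1,2) by linarith
  have key: "(2 * s - 15 * t) * (r + t) \<le> (s - t) * (2 * r - t / D)"
  proof -
    have "(s - t) * (2 * r - t) - (2 * s - 15 * t) * (r + t) = t * (13 * r - 3 * s + 16 * t)"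
      by (simp add: algebra_simps)
    moreover have "t * (13 * r - 3 * s + 16 * t) > 0" using assms(1-3) by simp
    moreover have "(s - t) * (2 * r - t) \<le> (s - t) * (2 * r - t / D)"
      using st assms(1,4) by (intro mult_left_mono) (auto simp: divide_le_eq)
    ultimately show ?thesis by linarith
  qed
  have "Q \<le> D * ((r + t) / (s - t)) * P"
    using QP st assms(1,3) by (simp add: field_simps)
  then have "c * Q \<le> c * (D * ((r + t) / (s - t)) * P)" by (rule mult_left_mono[OF _ assms(5)])
  moreover have "(2 * r - t / D) * \<delta> = 2 * r * \<delta> - t * \<delta> / D" by (simp add: algebra_simps)
  ultimately have "(2 * r - t / D) * \<delta> \<le> D * ((r + t) / (s - t)) * (c * P)"
    using Q by (simp add: mult_ac)
  also have "\<dots> \<le> D * ((r + t) / (s - t)) * (M + t * \<delta> / D)"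
    using P st assms(1-4) by (intro mult_left_mono) auto
  finally have "(2 * r - t / D) * \<delta> \<le> (M + t * \<delta> / D) * (D * ((r + t) / (s - t)))"
    by (simp add: mult.commute)
  moreover have K: "D * ((r + t) / (s - t)) > 0" using st assms(1-4) by simp
  ultimately have "(2 * r - t / D) * \<delta> / (D * ((r + t) / (s - t))) \<le> M + t * \<delta> / D"
    by (simp only: pos_divide_le_eq[OF K])
  moreover have "(2 * r - t / D) * \<delta> / (D * ((r + t) / (s - t)))
      = (s - t) * (2 * r - t / D) / (r + t) * (\<delta> / D)"
    using st by (simp add: field_simps)
  ultimately have upper: "(s - t) * (2 * r - t / D) / (r + t) * (\<delta> / D) \<le> M + t * \<delta> / D"
    by metis
  have "2 * s - 15 * t \<le> (s - t) * (2 * r - t / D) / (r + t)"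
    using key assms(1-3) by (simp add: pos_le_divide_eq)
  then have "(2 * s - 15 * t) * (\<delta> / D) \<le> (s - t) * (2 * r - t / D) / (r + t) * (\<delta> / D)"
    using assms(4,6) by (intro mult_right_mono) auto
  moreover have "(2 * s - 16 * t) * \<delta> / D = (2 * s - 15 * t) * (\<delta> / D) - t * \<delta> / D"
    using assms(4) by (simp add: field_simps)
  ultimately have "(2 * s - 16 * t) * \<delta> / D \<le> M" using upper by linarith
  then have "(2 * s - 16 * t) * \<delta> / D / (2 * s) \<le> M / (2 * s)"
    using assms(1,2) by (intro divide_right_mono) auto
  moreover have "(2 * s - 16 * t) * \<delta> / D / (2 * s) = (1 / D) * (1 - 8 * (t / s)) * \<delta>"
    using assms(1,2,4) by (simp add: field_simps)
  ultimately show ?thesis by simp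
qed

lemma dens_upper_bound:
  assumes "cutoff \<phi>" "loc_finite_borel \<mu>" "loc_finite_borel \<nu>"
    and "\<gamma> > 0" "r > 0" "0 < s" "s \<le> r" "\<gamma> < (s / r)\<^sup>2 / 9"
    and "ball z s \<subseteq> ball x (3 * r)" "alpha \<phi> \<mu> \<nu> x r \<le> \<gamma> * dens \<mu> x r"
    and "C \<ge> 0" "\<And>\<rho> \<sigma>. \<rho> > 0 \<Longrightarrow> \<sigma> > 0 \<Longrightarrow> dens \<nu> z \<rho> \<le> C * dens \<nu> x \<sigma>"
  shows "dens \<mu> z s \<le> (C + (15 * C + 1) / 2 * sqrt \<gamma> * (r / s)) * dens \<mu> x r"
proof -
  define t where "t = sqrt \<gamma> * r"
  let ?c = "cconst \<phi> \<mu> \<nu> x r" and ?\<delta> = "dens \<mu> x r"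
  have t: "0 < t" "3 * t < s"
    using three_sqrt_mult_less[of \<gamma> r s] assms(4-8) by (auto simp: t_def mult.assoc)
  have zx: "dist z x + s \<le> 3 * r" using assms(6,9) by (simp add: ball_subset_ball_iff)
  have err: "alpha \<phi> \<mu> \<nu> x r * r^2 / t \<le> t * ?\<delta>"
  proof -
    have "alpha \<phi> \<mu> \<nu> x r * r^2 / t \<le> \<gamma> * ?\<delta> * r^2 / t"
      using assms(10) t(1) by (intro divide_right_mono mult_right_mono) auto
    also have "\<dots> = (sqrt \<gamma>)\<^sup>2 * ?\<delta> * r^2 / (sqrt \<gamma> * r)"
      using assms(4) by (simp add: t_def)
    also have "\<dots> = t * ?\<delta>"
      using assms(4,5) by (simp add: t_def power2_eq_square field_simps del: real_sqrt_mult_self)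
    finally show ?thesis .
  qed
  have P: "measure \<mu> (ball z s) \<le> ?c * measure \<nu> (ball z (s + t)) + t * ?\<delta>"
    using measure_ball_le_cconst_measure(1)[OF assms(1-3,5), where a=s and b="s + t" and w=z and x=x]
      assms(7,9) err zx t
    by (simp add: cball_subset_ball_iff)
  have Q: "?c * measure \<nu> (ball x (r - t)) \<le> 2 * r * ?\<delta> + t * ?\<delta>"
    using measure_ball_le_cconst_measure(2)[OF assms(1-3,5), where a="r - t" and b=r and w=x and x=x]
      err t assms(5,7)
    by (simp add: cball_subset_ball_iff ball_subset_ball_iff dens_def)
  have "dens \<nu> z (s + t) \<le> C * dens \<nu> x (r - t)"
    using assms(6,7,12) t by simp
  then have "measure \<nu> (ball z (s + t)) / (2 * (s + t))
      \<le> C * (measure \<nu> (ball x (r - t)) / (2 * (r - t)))"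
    by (simp add: dens_def)
  then have "measure \<mu> (ball z s) / (2 * s) \<le> (C + (15 * C + 1) / 2 * (t / s)) * ?\<delta>"
    by (rule density_upper_arith[OF t assms(7) cconst_nonneg[OF assms(1,5)] assms(11)
          dens_nonneg[OF assms(5)] P Q])
  then show ?thesis by (simp add: dens_def t_def mult.assoc)
qed

lemma dens_lower_bound:
  assumes "cutoff \<phi>" "loc_finite_borel \<mu>" "loc_finite_borel \<nu>"
    and "\<gamma> > 0" "r > 0" "0 < s" "s \<le> r" "1 \<le> D" "\<gamma> < (s / r)\<^sup>2 / (9 * D)"
    and "ball z s \<subseteq> ball x (3 * r)" "alpha \<phi> \<mu> \<nu> x r \<le> \<gamma> * dens \<mu> x r"
    and "\<And>\<rho> \<sigma>. \<rho> > 0 \<Longrightarrow> \<sigma> > 0 \<Longrightarrow> dens \<nu> x \<rho> \<le> D * dens \<nu> z \<sigma>"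
  shows "(1 / D) * (1 - 8 * sqrt (D * \<gamma>) * (r / s)) * dens \<mu> x r \<le> dens \<mu> z s"
proof -
  define t where "t = sqrt (D * \<gamma>) * r"
  let ?c = "cconst \<phi> \<mu> \<nu> x r" and ?\<delta> = "dens \<mu> x r"
  have "D * \<gamma> < D * ((s / r)\<^sup>2 / (9 * D))" using assms(8,9) by (intro mult_strict_left_mono) auto
  then have "D * \<gamma> < (s / r)\<^sup>2 / 9" using assms(8) by simp
  then have t: "0 < t" "3 * t < s"
    using three_sqrt_mult_less[of "D * \<gamma>" r s] assms(4-8) by (auto simp: t_def mult.assoc)
  have zx: "dist z x + s \<le> 3 * r" using assms(6,10) by (simp add: ball_subset_ball_iff)
  have err: "alpha \<phi> \<mu> \<nu> x r * r^2 / t \<le> t * ?\<delta> / D"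
  proof -
    have "alpha \<phi> \<mu> \<nu> x r * r^2 / t \<le> \<gamma> * ?\<delta> * r^2 / t"
      using assms(11) t(1) by (intro divide_right_mono mult_right_mono) auto
    also have "\<dots> = (sqrt (D * \<gamma>))\<^sup>2 / D * ?\<delta> * r^2 / (sqrt (D * \<gamma>) * r)"
      using assms(4,8) by (simp add: t_def)
    also have "\<dots> = t * ?\<delta> / D"
      using assms(4,5,8) by (simp add: t_def power2_eq_square field_simps del: real_sqrt_mult_self)
    finally show ?thesis .
  qed
  have P: "?c * measure \<nu> (ball z (s - t)) \<le> measure \<mu> (ball z s) + t * ?\<delta> / D"
    using measure_ball_le_cconst_measure(2)[OF assms(1-3,5), where a="s - t" and b=s and w=z and x=x]
      err zx t assms(5)
    by (simp add: cball_subset_ball_iff ball_subset_ball_iff)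
  have Q: "2 * r * ?\<delta> \<le> ?c * measure \<nu> (ball x (r + t)) + t * ?\<delta> / D"
    using measure_ball_le_cconst_measure(1)[OF assms(1-3,5), where a=r and b="r + t" and w=x and x=x]
      err t assms(5,7)
    by (simp add: cball_subset_ball_iff ball_subset_ball_iff dens_def)
  have "dens \<nu> x (r + t) \<le> D * dens \<nu> z (s - t)"
    using assms(5,12) t by simp
  then have "measure \<nu> (ball x (r + t)) / (2 * (r + t))
      \<le> D * (measure \<nu> (ball z (s - t)) / (2 * (s - t)))"
    by (simp add: dens_def)
  then have "(1 / D) * (1 - 8 * (t / s)) * ?\<delta> \<le> measure \<mu> (ball z s) / (2 * s)"
    by (rule density_lower_arith[OF t assms(7,8) cconst_nonneg[OF assms(1,5)]
          dens_nonneg[OF assms(5)] P Q])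
  then show ?thesis by (simp add: dens_def t_def mult.assoc)
qed

lemma dens_upper_bound_Dratio:
  assumes "cutoff \<phi>" "loc_finite_borel \<mu>" "loc_finite_borel \<nu>"
    and "\<gamma> > 0" "r > 0" "0 < s" "s \<le> r" "\<gamma> < (s / r)\<^sup>2 / 9"
    and "ball z s \<subseteq> ball x (3 * r)" "alpha \<phi> \<mu> \<nu> x r \<le> \<gamma> * dens \<mu> x r"
    and "x \<in> msupp \<nu>" "Dratio \<nu> \<noteq> \<infinity>"
  shows "dens \<mu> z s \<le> 3 * real_of_ereal (Dratio \<nu>) * (1 + 8 * sqrt \<gamma> * (r / s)) * dens \<mu> x r"
proof -
  let ?D = "real_of_ereal (Dratio \<nu>)"
  have D1: "1 \<le> ?D" by (rule Dratio_ge_one[OF assms(3,11,12)])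
  have "dens \<mu> z s \<le> (2 * ?D + (15 * (2 * ?D) + 1) / 2 * sqrt \<gamma> * (r / s)) * dens \<mu> x r"
    using D1 dens_le_two_Dratio[OF assms(3,12,11)] by (intro dens_upper_bound[OF assms(1-10)]) auto
  also have "\<dots> \<le> 3 * ?D * (1 + 8 * sqrt \<gamma> * (r / s)) * dens \<mu> x r"
  proof (intro mult_right_mono)
    have "(15 * (2 * ?D) + 1) / 2 * (sqrt \<gamma> * (r / s)) \<le> 24 * ?D * (sqrt \<gamma> * (r / s))"
      using D1 assms(4-6) by (intro mult_right_mono) auto
    then show "2 * ?D + (15 * (2 * ?D) + 1) / 2 * sqrt \<gamma> * (r / s) \<le> 3 * ?D * (1 + 8 * sqrt \<gamma> * (r / s))"
      using D1 by (simp add: algebra_simps)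
  qed (rule dens_nonneg[OF assms(5)])
  finally show ?thesis .
qed

theorem lemma4p2:
  fixes \<mu> \<nu> :: "complex measure" and \<phi> :: "real \<Rightarrow> real"
    and \<gamma> r s :: real and x z :: complex
  assumes "cutoff \<phi>"
    and "loc_finite_borel \<mu>" and "loc_finite_borel \<nu>"
    and "\<gamma> > 0" and "r > 0" and "0 < s" and "s \<le> r"
    and "ball z s \<subseteq> ball x (3 * r)"
    and "x \<in> msupp \<nu>"
    and "alpha \<phi> \<mu> \<nu> x r \<le> \<gamma> * dens \<mu> x r"
  shows "(\<gamma> < (s / r)\<^sup>2 / 9 \<longrightarrow>
           (Dratio \<nu> \<noteq> \<infinity> \<longrightarrow>
              dens \<mu> z s \<le> 3 * real_of_ereal (Dratio \<nu>) * (1 + 8 * sqrt \<gamma> * (r / s)) * dens \<mu> x r)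
         \<and> (line_measure \<nu> \<longrightarrow> dens \<mu> z s \<le> (1 + 8 * sqrt \<gamma> * (r / s)) * dens \<mu> x r))
       \<and> (Dratio \<nu> \<noteq> \<infinity> \<and> \<gamma> < (s / r)\<^sup>2 / (9 * real_of_ereal (Dratio \<nu>)) \<and>
           z \<in> msupp \<nu> \<longrightarrow>
           dens \<mu> z s \<ge> (1 / real_of_ereal (Dratio \<nu>)) *
             (1 - 8 * sqrt (real_of_ereal (Dratio \<nu>) * \<gamma>) * (r / s)) * dens \<mu> x r)"
proof (intro conjI impI)
  assume "\<gamma> < (s / r)\<^sup>2 / 9" and "Dratio \<nu> \<noteq> \<infinity>"
  then show "dens \<mu> z s \<le> 3 * real_of_ereal (Dratio \<nu>) * (1 + 8 * sqrt \<gamma> * (r / s)) * dens \<mu> x r"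
    using dens_upper_bound_Dratio assms by blast
next
  assume "\<gamma> < (s / r)\<^sup>2 / 9" and "line_measure \<nu>"
  then show "dens \<mu> z s \<le> (1 + 8 * sqrt \<gamma> * (r / s)) * dens \<mu> x r"
    using dens_upper_bound[OF assms(1-7) _ assms(8,10), of 1] line_measure_dens_le[OF _ assms(9)]
    by simp
next
  assume "Dratio \<nu> \<noteq> \<infinity> \<and> \<gamma> < (s / r)\<^sup>2 / (9 * real_of_ereal (Dratio \<nu>)) \<and> z \<in> msupp \<nu>"
  then show "dens \<mu> z s \<ge> (1 / real_of_ereal (Dratio \<nu>)) *
             (1 - 8 * sqrt (real_of_ereal (Dratio \<nu>) * \<gamma>) * (r / s)) * dens \<mu> x r"
    using dens_lower_bound[OF assms(1-7) Dratio_ge_one[OF assms(3,9)] _ assms(8,10)]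
      dens_le_Dratio[OF assms(3) _ assms(9)] by blast
qed

end
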